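(* Given a dynamic search tree $\overline{\mathcal{T}}_S$ (with $\Theta(\beta)$ elements per leaf) with an implementation of $\mathsf{Insert}$ taking $T_{\mathsf{Insert}}$ time, the $\mathsf{InsertIbltTree}$ operation takes $O(T_{\mathsf{Insert}}+\Delta_L\beta+\Delta_I c\delta)$ time, where $\Delta_L$ and $\Delta_I$ are the numbers of leaf and internal nodes whose sets of blocks change due to the insertion, and $c$ is the number of children per internal node.
   Context: An IBLT (Invertible Bloom Lookup Table) here has $O(\delta)$ cells holding XOR-sums of keys, values and tags of the triples hashed to them; inserting a triple costs $O(1)$ and combining two IBLTs (cellwise XOR) costs $O(\delta)$. The IBLT tree over a dynamic search tree $\overline{\mathcal{T}}_S$ on a set $S$ of key-value-tag triples with $\Theta(\beta)$ triples per leaf stores at every node an IBLT of the triples in its subtree (leaf IBLTs built from their triples; internal IBLTs as the combination of the children's IBLTs plus the node's own triple). $\mathsf{InsertIbltTree}(k,v,t)$ performs $\mathsf{Insert}$ on $\overline{\mathcal{T}}_S$, tracks the nodes whose subtree contents change, and recomputes each such node's IBLT (leaves from their triples, internal nodes by combining their children's IBLTs). *)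

theory Defs
  imports Main "HOL-Library.Multiset"
begin

text \<open>The XOR-sum is modelled by the addition of
  an abelian group (for bit strings this is XOR).  An IBLT with \<delta> cells is a list
  of \<delta> cells, each holding the sums of keys, values and tags hashed to it.
  Every operation returns its result together with its cost:
  inserting a triple costs 1 (O(1)), combining two IBLTs costs \<delta> (cellwise),
  creating an empty IBLT costs 1.\<close>

type_synonym ('k,'v,'t) triple = "'k \<times> 'v \<times> 't"
type_synonym ('k,'v,'t) iblt = "('k \<times> 'v \<times> 't) list"

definition add3 :: "('k::ab_group_add,'v::ab_group_add,'t::ab_group_add) triple \<Rightarrow> ('k,'v,'t) triple \<Rightarrow> ('k,'v,'t) triple" where
  "add3 a b = (fst a + fst b, fst (snd a) + fst (snd b), snd (snd a) + snd (snd b))"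

definition iblt_empty :: "nat \<Rightarrow> ('k::ab_group_add,'v::ab_group_add,'t::ab_group_add) iblt \<times> nat" where
  "iblt_empty \<delta> = (replicate \<delta> (0,0,0), 1)"

definition iblt_insert :: "('k \<Rightarrow> nat list) \<Rightarrow> ('k::ab_group_add,'v::ab_group_add,'t::ab_group_add) triple
    \<Rightarrow> ('k,'v,'t) iblt \<Rightarrow> ('k,'v,'t) iblt \<times> nat" where
  "iblt_insert h x B =
     (fold (\<lambda>i C. C[i mod length C := add3 (C ! (i mod length C)) x]) (h (fst x)) B, 1)"

definition iblt_combine :: "('k::ab_group_add,'v::ab_group_add,'t::ab_group_add) iblt \<Rightarrow> ('k,'v,'t) iblt \<Rightarrow> ('k,'v,'t) iblt \<times> nat" where
  "iblt_combine A B = (map2 add3 A B, length A)"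

fun iblt_inserts :: "('k \<Rightarrow> nat list) \<Rightarrow> ('k::ab_group_add,'v::ab_group_add,'t::ab_group_add) triple list
    \<Rightarrow> ('k,'v,'t) iblt \<times> nat \<Rightarrow> ('k,'v,'t) iblt \<times> nat" where
  "iblt_inserts h [] Bc = Bc"
| "iblt_inserts h (x # xs) (B, c) = (let (B', c') = iblt_insert h x B in iblt_inserts h xs (B', c + c'))"

definition iblt_build :: "('k \<Rightarrow> nat list) \<Rightarrow> nat \<Rightarrow> ('k::ab_group_add,'v::ab_group_add,'t::ab_group_add) triple list
    \<Rightarrow> ('k,'v,'t) iblt \<times> nat" where
  "iblt_build h \<delta> xs = iblt_inserts h xs (iblt_empty \<delta>)"

fun iblt_combines :: "('k::ab_group_add,'v::ab_group_add,'t::ab_group_add) iblt list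
    \<Rightarrow> ('k,'v,'t) iblt \<times> nat \<Rightarrow> ('k,'v,'t) iblt \<times> nat" where
  "iblt_combines [] Bc = Bc"
| "iblt_combines (A # As) (B, c) = (let (B', c') = iblt_combine B A in iblt_combines As (B', c + c'))"

text \<open>A node carries an identity 'n (so that nodes of the tree before and after an
  insertion can be related), leaves hold a list of triples, internal nodes hold
  their children, their own triple, and every node stores an IBLT annotation.\<close>

datatype ('n,'e,'i) itree =
    Leaf 'n "'e list" 'i
  | Node 'n "('n,'e,'i) itree list" 'e 'i

fun node_id :: "('n,'e,'i) itree \<Rightarrow> 'n" where
  "node_id (Leaf n _ _) = n"
| "node_id (Node n _ _ _) = n"

fun annot :: "('n,'e,'i) itree \<Rightarrow> 'i" where
  "annot (Leaf _ _ I) = I"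
| "annot (Node _ _ _ I) = I"

fun is_leaf :: "('n,'e,'i) itree \<Rightarrow> bool" where
  "is_leaf (Leaf _ _ _) = True"
| "is_leaf (Node _ _ _ _) = False"

fun contents :: "('n,'e,'i) itree \<Rightarrow> 'e multiset" where
  "contents (Leaf _ es _) = mset es"
| "contents (Node _ cs e _) = add_mset e (sum_list (map contents cs))"

fun nodes :: "('n,'e,'i) itree \<Rightarrow> ('n,'e,'i) itree list" where
  "nodes (Leaf n es I) = [Leaf n es I]"
| "nodes (Node n cs e I) = Node n cs e I # concat (map nodes cs)"

definition changed :: "('n,'e,'i) itree \<Rightarrow> ('n,'e,'i) itree \<Rightarrow> bool" where
  "changed old s \<longleftrightarrow> \<not> (\<exists>u \<in> set (nodes old). node_id u = node_id s \<and> contents u = contents s)"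

definition delta_L :: "('n,'e,'i) itree \<Rightarrow> ('n,'e,'i) itree \<Rightarrow> nat" where
  "delta_L old new = length (filter (\<lambda>s. is_leaf s \<and> changed old s) (nodes new))"

definition delta_I :: "('n,'e,'i) itree \<Rightarrow> ('n,'e,'i) itree \<Rightarrow> nat" where
  "delta_I old new = length (filter (\<lambda>s. \<not> is_leaf s \<and> changed old s) (nodes new))"

fun recompute :: "('k \<Rightarrow> nat list) \<Rightarrow> nat \<Rightarrow> ('n, ('k,'v,'t) triple, ('k,'v,'t) iblt) itree
    \<Rightarrow> ('n, ('k::ab_group_add,'v::ab_group_add,'t::ab_group_add) triple, ('k,'v,'t) iblt) itree
    \<Rightarrow> ('n, ('k,'v,'t) triple, ('k,'v,'t) iblt) itree \<times> nat" where
  "recompute h \<delta> old (Leaf n es I) =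
     (if changed old (Leaf n es I)
      then (let (J, k) = iblt_build h \<delta> es in (Leaf n es J, k))
      else (Leaf n es I, 0))"
| "recompute h \<delta> old (Node n cs e I) =
     (if changed old (Node n cs e I)
      then (let rs = map (recompute h \<delta> old) cs;
                cs' = map fst rs;
                k1 = sum_list (map snd rs);
                (J, k2) = iblt_combines (map annot cs') (iblt_empty \<delta>);
                (J', k3) = iblt_insert h e J
            in (Node n cs' e J', k1 + k2 + k3))
      else (Node n cs e I, 0))"

definition insert_iblt_tree ::
  "(('n,('k,'v,'t) triple,('k,'v,'t) iblt) itree \<Rightarrow> ('k,'v,'t) triple \<Rightarrow> ('n,('k,'v,'t) triple,('k,'v,'t) iblt) itree)
   \<Rightarrow> (('n,('k,'v,'t) triple,('k,'v,'t) iblt) itree \<Rightarrow> ('k,'v,'t) triple \<Rightarrow> nat)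
   \<Rightarrow> ('k \<Rightarrow> nat list) \<Rightarrow> nat
   \<Rightarrow> ('n,('k::ab_group_add,'v::ab_group_add,'t::ab_group_add) triple,('k,'v,'t) iblt) itree \<Rightarrow> ('k,'v,'t) triple
   \<Rightarrow> ('n,('k,'v,'t) triple,('k,'v,'t) iblt) itree \<times> nat" where
  "insert_iblt_tree ins T h \<delta> S x =
     (let S' = ins S x; (R, k) = recompute h \<delta> S S' in (R, T S x + k))"

end

theory Submission
  imports Defs
begin

text \<open>Recomputation touches only the changed nodes, and its cost is local: rebuilding a
  changed leaf from its at most \<open>m\<close> triples costs at most \<open>m + 1\<close>, and a changed internal
  node with at most \<open>c\<close> children costs one empty IBLT, \<open>c\<close> combinations of cost \<open>\<delta>\<close> and
  one insertion, i.e. at most \<open>c\<delta> + 2\<close>.  Summing over the changed nodes by induction on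
  the new tree, and absorbing the additive constants using \<open>\<beta>, c, \<delta> \<ge> 1\<close>, gives the
  bound with \<open>K = B + 3\<close>.\<close>

lemma iblt_inserts_cost: "snd (iblt_inserts h xs (B, c)) = c + length xs"
  by (induction xs arbitrary: B c) (auto simp: iblt_insert_def)

lemma iblt_build_cost: "snd (iblt_build h \<delta> xs) = 1 + length xs"
  by (simp add: iblt_build_def iblt_empty_def iblt_inserts_cost)

lemma iblt_combines_cost_le: "snd (iblt_combines As (B, c)) \<le> c + length As * length B"
proof (induction As arbitrary: B c)
  case (Cons A As)
  have step: "iblt_combines (A # As) (B, c) = iblt_combines As (map2 add3 B A, c + length B)"
    by (simp add: iblt_combine_def)
  have "length As * length (map2 add3 B A) \<le> length As * length B"
    by (intro mult_le_mono2) simp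
  moreover have "length (A # As) * length B = length B + length As * length B"
    by simp
  ultimately show ?case
    unfolding step using Cons.IH[of "map2 add3 B A" "c + length B"] by linarith
qed simp

lemma iblt_combines_empty_cost_le: "snd (iblt_combines As (iblt_empty \<delta>)) \<le> 1 + length As * \<delta>"
  using iblt_combines_cost_le[of As "replicate \<delta> (0, 0, 0)" 1] by (simp add: iblt_empty_def)

lemma recompute_Node_cost:
  assumes "changed old (Node n cs e I)"
  shows "snd (recompute h \<delta> old (Node n cs e I))
    = (\<Sum>t\<leftarrow>cs. snd (recompute h \<delta> old t))
      + snd (iblt_combines (map (annot \<circ> fst \<circ> recompute h \<delta> old) cs) (iblt_empty \<delta>)) + 1"
  using assms by (simp add: iblt_insert_def comp_def split: prod.splits)

lemma length_filter_nodes_Node: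
  "length (filter P (nodes (Node n cs e I)))
    = (if P (Node n cs e I) then 1 else 0) + (\<Sum>t\<leftarrow>cs. length (filter P (nodes t)))"
  by (simp add: filter_concat length_concat comp_def)

lemma delta_L_Leaf: "delta_L old (Leaf n es I) = (if changed old (Leaf n es I) then 1 else 0)"
  by (simp add: delta_L_def)

lemma delta_I_Leaf: "delta_I old (Leaf n es I) = 0"
  by (simp add: delta_I_def)

lemma delta_L_Node: "delta_L old (Node n cs e I) = (\<Sum>t\<leftarrow>cs. delta_L old t)"
  unfolding delta_L_def length_filter_nodes_Node by simp

lemma delta_I_Node:
  "delta_I old (Node n cs e I) = (if changed old (Node n cs e I) then 1 else 0) + (\<Sum>t\<leftarrow>cs. delta_I old t)"
  unfolding delta_I_def length_filter_nodes_Node by simp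

definition leaf_sizes_le :: "nat \<Rightarrow> ('n,'e,'i) itree \<Rightarrow> bool" where
  "leaf_sizes_le m t \<longleftrightarrow> (\<forall>s \<in> set (nodes t). \<forall>n es I. s = Leaf n es I \<longrightarrow> length es \<le> m)"

definition fanout_le :: "nat \<Rightarrow> ('n,'e,'i) itree \<Rightarrow> bool" where
  "fanout_le c t \<longleftrightarrow> (\<forall>s \<in> set (nodes t). \<forall>n cs e I. s = Node n cs e I \<longrightarrow> length cs \<le> c)"

lemma leaf_sizes_le_Leaf: "leaf_sizes_le m (Leaf n es I) \<longleftrightarrow> length es \<le> m"
  by (simp add: leaf_sizes_le_def)

lemma leaf_sizes_le_Node: "leaf_sizes_le m (Node n cs e I) \<longleftrightarrow> (\<forall>t \<in> set cs. leaf_sizes_le m t)"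
  by (auto simp: leaf_sizes_le_def)

lemma fanout_le_Node:
  "fanout_le c (Node n cs e I) \<longleftrightarrow> length cs \<le> c \<and> (\<forall>t \<in> set cs. fanout_le c t)"
  by (auto simp: fanout_le_def)

lemma recompute_cost_le:
  assumes "leaf_sizes_le m t" and "fanout_le c t"
  shows "snd (recompute h \<delta> old t) \<le> (m + 1) * delta_L old t + (c * \<delta> + 2) * delta_I old t"
  using assms
proof (induction t)
  case (Leaf n es I)
  then show ?case
    by (simp add: delta_L_Leaf delta_I_Leaf leaf_sizes_le_Leaf iblt_build_cost case_prod_unfold)
next
  case (Node n cs e I)
  let ?bound = "\<lambda>t. (m + 1) * delta_L old t + (c * \<delta> + 2) * delta_I old t"
  show ?case
  proof (cases "changed old (Node n cs e I)")
    case True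
    have "length cs \<le> c"
      using Node.prems(2) by (simp add: fanout_le_Node)
    then have "length cs * \<delta> \<le> c * \<delta>"
      by (rule mult_le_mono1)
    then have combine: "snd (iblt_combines (map (annot \<circ> fst \<circ> recompute h \<delta> old) cs) (iblt_empty \<delta>))
        \<le> 1 + c * \<delta>"
      using iblt_combines_empty_cost_le[of "map (annot \<circ> fst \<circ> recompute h \<delta> old) cs" \<delta>]
      unfolding length_map by linarith
    have "(\<Sum>t\<leftarrow>cs. snd (recompute h \<delta> old t)) \<le> (\<Sum>t\<leftarrow>cs. ?bound t)"
      using Node.IH Node.prems by (intro sum_list_mono) (simp add: leaf_sizes_le_Node fanout_le_Node)
    also have "\<dots> = (m + 1) * (\<Sum>t\<leftarrow>cs. delta_L old t) + (c * \<delta> + 2) * (\<Sum>t\<leftarrow>cs. delta_I old t)"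
      by (simp add: sum_list_addf sum_list_const_mult)
    finally have children: "(\<Sum>t\<leftarrow>cs. snd (recompute h \<delta> old t))
        \<le> (m + 1) * (\<Sum>t\<leftarrow>cs. delta_L old t) + (c * \<delta> + 2) * (\<Sum>t\<leftarrow>cs. delta_I old t)" .
    have "snd (recompute h \<delta> old (Node n cs e I))
        = (\<Sum>t\<leftarrow>cs. snd (recompute h \<delta> old t))
          + snd (iblt_combines (map (annot \<circ> fst \<circ> recompute h \<delta> old) cs) (iblt_empty \<delta>)) + 1"
      by (rule recompute_Node_cost[OF True])
    also have "\<dots> \<le> (m + 1) * (\<Sum>t\<leftarrow>cs. delta_L old t)
        + (c * \<delta> + 2) * (\<Sum>t\<leftarrow>cs. delta_I old t) + (c * \<delta> + 2)"
      using children combine by linarith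
    also have "\<dots> = ?bound (Node n cs e I)"
      using True by (simp add: delta_L_Node delta_I_Node)
    finally show ?thesis .
  qed (simp add: delta_L_Node delta_I_Node)
qed

lemma insert_iblt_tree_cost_le:
  assumes "1 \<le> \<delta>" and "1 \<le> \<beta>" and "1 \<le> c"
    and "leaf_sizes_le (B * \<beta>) (ins S x)" and "fanout_le c (ins S x)"
  shows "snd (insert_iblt_tree ins T h \<delta> S x)
    \<le> (B + 3) * (T S x + delta_L S (ins S x) * \<beta> + delta_I S (ins S x) * c * \<delta>)"
proof -
  let ?\<Delta>\<^sub>L = "delta_L S (ins S x)" and ?\<Delta>\<^sub>I = "delta_I S (ins S x)"
  have "1 \<le> c * \<delta>"
    using assms(1,3) by (simp add: Suc_le_eq)
  then have internal_factor: "c * \<delta> + 2 \<le> (B + 3) * (c * \<delta>)"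
    using mult_le_mono1[of 3 "B + 3" "c * \<delta>"] by linarith
  have internal: "(c * \<delta> + 2) * ?\<Delta>\<^sub>I \<le> (B + 3) * (?\<Delta>\<^sub>I * c * \<delta>)"
    using mult_le_mono1[OF internal_factor, of "?\<Delta>\<^sub>I"] by (simp only: ac_simps)
  have leaf_factor: "B * \<beta> + 1 \<le> (B + 3) * \<beta>"
    using assms(2) by (simp add: algebra_simps)
  have leaves: "(B * \<beta> + 1) * ?\<Delta>\<^sub>L \<le> (B + 3) * (?\<Delta>\<^sub>L * \<beta>)"
    using mult_le_mono1[OF leaf_factor, of "?\<Delta>\<^sub>L"] by (simp only: ac_simps)
  have "snd (insert_iblt_tree ins T h \<delta> S x) = T S x + snd (recompute h \<delta> S (ins S x))"
    by (simp add: insert_iblt_tree_def case_prod_unfold Let_def)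
  also have "\<dots> \<le> T S x + ((B * \<beta> + 1) * ?\<Delta>\<^sub>L + (c * \<delta> + 2) * ?\<Delta>\<^sub>I)"
    using recompute_cost_le[OF assms(4,5)] by simp
  also have "\<dots> \<le> (B + 3) * T S x + (B + 3) * (?\<Delta>\<^sub>L * \<beta>) + (B + 3) * (?\<Delta>\<^sub>I * c * \<delta>)"
    using leaves internal mult_le_mono1[of 1 "B + 3" "T S x"] by linarith
  also have "\<dots> = (B + 3) * (T S x + ?\<Delta>\<^sub>L * \<beta> + ?\<Delta>\<^sub>I * c * \<delta>)"
    by (simp only: distrib_left)
  finally show ?thesis .
qed

theorem lemma9:
  "\<forall>B::nat. \<exists>K::nat. \<forall>ins T h (\<delta>::nat) (\<beta>::nat) (c::nat)
       (S :: ('n,('k::ab_group_add,'v::ab_group_add,'t::ab_group_add) triple,('k,'v,'t) iblt) itree) x.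
     1 \<le> \<delta> \<longrightarrow> 1 \<le> \<beta> \<longrightarrow> 1 \<le> c \<longrightarrow>
     (\<forall>s \<in> set (nodes (ins S x)). \<forall>n es I. s = Leaf n es I \<longrightarrow> length es \<le> B * \<beta>) \<longrightarrow>
     (\<forall>s \<in> set (nodes (ins S x)). \<forall>n cs e I. s = Node n cs e I \<longrightarrow> length cs = c) \<longrightarrow>
     snd (insert_iblt_tree ins T h \<delta> S x)
       \<le> K * (T S x + delta_L S (ins S x) * \<beta> + delta_I S (ins S x) * c * \<delta>)"
  apply (intro allI)
  subgoal for B
    by (intro exI[of _ "B + 3"] allI impI, rule insert_iblt_tree_cost_le)
      (simp_all add: leaf_sizes_le_def fanout_le_def)
  done

end
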